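(* Let $V$ be a finite elementary abelian $2$-group (a finite-dimensional $\mathbb F_2$-vector space) acting simply transitively by translations on a finite set $Q=a+V$, and let $\pi:Q\to X$ be a surjection which is support-equivariant, meaning that $\pi(q)=\pi(q')$ implies $\pi(q+v)=\pi(q'+v)$ for all $q,q'\in Q$ and $v\in V$. Then $|X|$ is a power of $2$. In particular, $|X|\neq 3$. *)

theory Defs
  imports Main
begin

definition simply_transitive_translation ::
  "('q \<Rightarrow> 'v::ab_group_add \<Rightarrow> 'q) \<Rightarrow> 'q set \<Rightarrow> bool" where
  "simply_transitive_translation act Q \<longleftrightarrow>
     (\<forall>q\<in>Q. act q 0 = q) \<and>
     (\<forall>q\<in>Q. \<forall>v w. act (act q v) w = act q (v + w)) \<and>
     (\<forall>q\<in>Q. \<forall>v. act q v \<in> Q) \<and>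
     (\<forall>q\<in>Q. \<forall>q'\<in>Q. \<exists>!v. act q v = q')"

definition support_equivariant ::
  "('q \<Rightarrow> 'v \<Rightarrow> 'q) \<Rightarrow> 'q set \<Rightarrow> ('q \<Rightarrow> 'x) \<Rightarrow> bool" where
  "support_equivariant act Q \<pi> \<longleftrightarrow>
     (\<forall>q\<in>Q. \<forall>q'\<in>Q. \<forall>v. \<pi> q = \<pi> q' \<longrightarrow> \<pi> (act q v) = \<pi> (act q' v))"

end

theory Submission
  imports Defs
begin

text \<open>Pulling \<pi> back along \<open>v \<mapsto> a + v\<close> gives a map \<open>f\<close> on \<open>V\<close> whose level sets are
  preserved by translations. Hence its kernel \<open>K = f\<^sup>-\<^sup>1(f 0)\<close> is closed under addition and
  the fibres of \<open>f\<close> are the translates of \<open>K\<close>, so \<open>|V| = |X| \<cdot> |K|\<close>. Since every element is its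
  own inverse, additively closed sets containing 0 are subgroups, and each has index a power of 2:
  adjoining an element outside such a set exactly doubles it.\<close>

definition add_submonoid :: "'v::monoid_add set \<Rightarrow> bool" where
  "add_submonoid S \<longleftrightarrow> 0 \<in> S \<and> (\<forall>x\<in>S. \<forall>y\<in>S. x + y \<in> S)"

lemma add_submonoid_UNIV: "add_submonoid UNIV"
  unfolding add_submonoid_def by simp

lemma add_submonoid_finite_card_pos:
  "add_submonoid S \<Longrightarrow> finite S \<Longrightarrow> card S > 0"
  unfolding add_submonoid_def by (auto simp: card_gt_0_iff)

lemma disjoint_translate_add_submonoid:
  fixes K :: "'v::ab_group_add set"
  assumes boolean: "\<And>v::'v. v + v = 0"
    and K: "add_submonoid K" and g: "g \<notin> K"
  shows "K \<inter> (+) g ` K = {}"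
proof (rule ccontr)
  assume "K \<inter> (+) g ` K \<noteq> {}"
  then obtain y where "y \<in> K" "g + y \<in> K" by auto
  then have "(g + y) + y \<in> K" using K unfolding add_submonoid_def by blast
  then show False using g boolean by (simp add: add.assoc)
qed

lemma add_submonoid_Un_translate:
  fixes K :: "'v::ab_group_add set"
  assumes boolean: "\<And>v::'v. v + v = 0" and K: "add_submonoid K"
  shows "add_submonoid (K \<union> (+) g ` K)"
  unfolding add_submonoid_def
proof (intro conjI ballI)
  show "0 \<in> K \<union> (+) g ` K" using K unfolding add_submonoid_def by simp
next
  have closed: "a + b \<in> K" if "a \<in> K" "b \<in> K" for a b
    using K that unfolding add_submonoid_def by blast
  have sums: "a + b \<in> K" "a + (g + b) = g + (a + b)" "(g + a) + b = g + (a + b)"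
      "(g + a) + (g + b) = a + b" if "a \<in> K" "b \<in> K" for a b
    using closed[OF that] boolean[of g] by (simp_all add: algebra_simps)
  fix x y assume "x \<in> K \<union> (+) g ` K" "y \<in> K \<union> (+) g ` K"
  then show "x + y \<in> K \<union> (+) g ` K"
    by (elim UnE imageE) (simp_all add: sums)
qed

lemma card_add_submonoid_index_power_of_two:
  fixes G K :: "'v::ab_group_add set"
  assumes boolean: "\<And>v::'v. v + v = 0"
    and "finite G" "K \<subseteq> G" "add_submonoid G" "add_submonoid K"
  shows "\<exists>k. card G = 2 ^ k * card K"
  using assms(2-)
proof (induction "card G - card K" arbitrary: K rule: less_induct)
  case less
  show ?case
  proof (cases "K = G")
    case True
    then show ?thesis by (intro exI[of _ 0]) simp
  next
    case False
    then obtain g where g: "g \<in> G" "g \<notin> K" using less.prems by blast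
    define K' where "K' = K \<union> (+) g ` K"
    have fin: "finite K" using less.prems finite_subset by blast
    have card_K': "card K' = 2 * card K"
      using disjoint_translate_add_submonoid[OF boolean less.prems(4) g(2)] fin
      unfolding K'_def by (simp add: card_Un_disjoint card_image)
    have sub: "K' \<subseteq> G"
      using less.prems g unfolding K'_def add_submonoid_def by auto
    have "card K' \<le> card G" using less.prems(1) sub by (rule card_mono)
    then have "card G - card K' < card G - card K"
      using card_K' add_submonoid_finite_card_pos[OF less.prems(4) fin] by linarith
    moreover have "add_submonoid K'"
      unfolding K'_def using boolean less.prems(4) by (rule add_submonoid_Un_translate)
    ultimately obtain k where "card G = 2 ^ k * card K'"
      using less.hyps less.prems(1,3) sub by blast
    then have "card G = 2 ^ Suc k * card K" using card_K' by simp
    then show ?thesis by blast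
  qed
qed

lemma add_submonoid_kernel:
  fixes f :: "'v::ab_group_add \<Rightarrow> 'x"
  assumes compat: "\<And>v w u. f v = f w \<Longrightarrow> f (v + u) = f (w + u)"
  shows "add_submonoid {v. f v = f 0}"
  unfolding add_submonoid_def
proof (intro conjI ballI, simp_all)
  fix x y assume "f x = f 0" "f y = f 0"
  then show "f (x + y) = f 0" using compat[of x 0 y] by simp
qed

lemma fibre_eq_translate_kernel:
  fixes f :: "'v::ab_group_add \<Rightarrow> 'x"
  assumes compat: "\<And>v w u. f v = f w \<Longrightarrow> f (v + u) = f (w + u)"
  shows "f -` {f v} = (+) v ` {w. f w = f 0}"
proof (intro set_eqI iffI)
  fix w assume "w \<in> f -` {f v}"
  then have "f (w - v) = f 0" using compat[of w v "- v"] by simp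
  moreover have "w = v + (w - v)" by simp
  ultimately show "w \<in> (+) v ` {w. f w = f 0}" by blast
next
  fix w assume "w \<in> (+) v ` {w. f w = f 0}"
  then obtain c where "f c = f 0" "w = v + c" by auto
  then show "w \<in> f -` {f v}" using compat[of c 0 v] by (simp add: add.commute)
qed

lemma card_UNIV_eq_card_range_mult_card_kernel:
  fixes f :: "'v::{ab_group_add, finite} \<Rightarrow> 'x"
  assumes compat: "\<And>v w u. f v = f w \<Longrightarrow> f (v + u) = f (w + u)"
  shows "card (UNIV :: 'v set) = card (range f) * card {v. f v = f 0}"
proof -
  have "UNIV = (\<Union>x\<in>range f. f -` {x})" by blast
  then have "card (UNIV :: 'v set) = card (\<Union>x\<in>range f. f -` {x})" by simp
  also have "\<dots> = (\<Sum>x\<in>range f. card (f -` {x}))"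
    by (rule card_UN_disjoint) auto
  also have "\<dots> = (\<Sum>x\<in>range f. card {v. f v = f 0})"
    by (rule sum.cong)
      (auto simp: fibre_eq_translate_kernel[where f = f, OF compat] card_image)
  finally show ?thesis by simp
qed

lemma range_simply_transitive_translation:
  assumes "simply_transitive_translation act Q" "a \<in> Q"
  shows "range (act a) = Q"
proof (intro equalityI subsetI)
  show "q \<in> Q" if "q \<in> range (act a)" for q
    using assms that unfolding simply_transitive_translation_def by auto
  show "q \<in> range (act a)" if "q \<in> Q" for q
  proof -
    obtain v where "act a v = q"
      using assms \<open>q \<in> Q\<close> unfolding simply_transitive_translation_def by blast
    then show ?thesis by blast
  qed
qed

lemma support_equivariant_orbit_map:
  assumes act: "simply_transitive_translation act Q" and "a \<in> Q"
    and equiv: "support_equivariant act Q \<pi>"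
    and "\<pi> (act a v) = \<pi> (act a w)"
  shows "\<pi> (act a (v + u)) = \<pi> (act a (w + u))"
proof -
  have "\<pi> (act (act a v) u) = \<pi> (act (act a w) u)"
    using assms unfolding support_equivariant_def simply_transitive_translation_def by blast
  then show ?thesis
    using act \<open>a \<in> Q\<close> unfolding simply_transitive_translation_def by simp
qed

lemma power_of_two_neq_three: "(2::nat) ^ k \<noteq> 3"
  by (cases k) (simp_all, presburger)

theorem proposition6p2:
  fixes act :: "'q \<Rightarrow> 'v::{ab_group_add, finite} \<Rightarrow> 'q"
    and Q :: "'q set" and X :: "'x set" and \<pi> :: "'q \<Rightarrow> 'x" and a :: 'q
  assumes elementary: "\<forall>v::'v. v + v = 0"
    and aQ: "a \<in> Q"
    and act: "simply_transitive_translation act Q"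
    and surj: "\<pi> ` Q = X"
    and equiv: "support_equivariant act Q \<pi>"
  shows "(\<exists>k::nat. card X = 2 ^ k) \<and> card X \<noteq> 3"
proof -
  define f where "f = \<pi> \<circ> act a"
  define K where "K = {v. f v = f 0}"
  have compat: "f (v + u) = f (w + u)" if "f v = f w" for v w u
    using that unfolding f_def comp_def by (rule support_equivariant_orbit_map[OF act aQ equiv])
  have "range f = X"
    using range_simply_transitive_translation[OF act aQ] surj
    unfolding f_def image_comp[symmetric] by simp
  then have card_UNIV: "card (UNIV :: 'v set) = card X * card K"
    using card_UNIV_eq_card_range_mult_card_kernel[where f = f, OF compat] unfolding K_def by simp
  have K: "add_submonoid K"
    unfolding K_def using compat by (rule add_submonoid_kernel)
  obtain k where "card (UNIV :: 'v set) = 2 ^ k * card K"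
    using card_add_submonoid_index_power_of_two[OF elementary[rule_format] finite_UNIV
        subset_UNIV add_submonoid_UNIV K] by blast
  with card_UNIV add_submonoid_finite_card_pos[OF K] have "card X = 2 ^ k" by auto
  then show ?thesis using power_of_two_neq_three by auto
qed

end
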